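(* For $x\in(0,27/4)$ define \begin{align*} V(x)=&\frac{\sqrt{3}}{2^{10/3}\pi x^{2/3}}\left(3\sqrt{1-4x/27}-1\right)\left(1+\sqrt{1-4x/27}\right)^{1/3}\\ &+\frac{1}{2^{8/3}\pi x^{1/3}\sqrt{3}}\left(3\sqrt{1-4x/27}+1\right)\left(1+\sqrt{1-4x/27}\right)^{-1/3}. \end{align*} Then for every integer $n\ge0$, \[ \int_0^{27/4}x^nV(x)\,dx=\binom{3n}{n}\frac{1}{n+1}. \] Consequently $V$ is the density of the unique probability measure $\mu_0$ on $\mathbb{R}$ whose moments are $\binom{3n}{n}\frac{1}{n+1}$, $n\ge0$. *)

theory Defs
  imports "HOL-Probability.Probability"
begin

definition V :: "real \<Rightarrow> real" where
  "V x = sqrt 3 / (2 powr (10/3) * pi * x powr (2/3))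
           * (3 * sqrt (1 - 4 * x / 27) - 1) * (1 + sqrt (1 - 4 * x / 27)) powr (1/3)
       + 1 / (2 powr (8/3) * pi * x powr (1/3) * sqrt 3)
           * (3 * sqrt (1 - 4 * x / 27) + 1) * (1 + sqrt (1 - 4 * x / 27)) powr (-1/3)"

definition mu0 :: "real measure" where
  "mu0 = density lborel (\<lambda>x. ennreal (indicator {0<..<27/4} x * V x))"

end

theory Submission
  imports Defs
begin

text \<open>
  The substitution x = phi t = 27 t^3 / (1 + t^3)^2, an increasing bijection from [0, 1] onto
  [0, 27/4], turns V x dx into W t phi' t dt with W t = (1 - t) (1 + t)^3 / (12 sqrt 3 pi t^2),
  so all moments of V become integrals of rational functions of t with explicit antiderivatives.
  An arctan term gives total mass 1. For each n, a multiple of phi^n t P_n(t) / (1 + t^3)^4,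
  with a polynomial P_n of degree 10 vanishing at t = 1, is an antiderivative of
  (a_n phi - b_n) phi^n W phi', where a_n = 2 (n + 2) (2 n + 1) and b_n = 3 (3 n + 1) (3 n + 2).
  It vanishes at both ends, so the moments satisfy a_n m_(n+1) = b_n m_n, as does
  binomial (3 n) n / (n + 1).

  For uniqueness, moments bounded by (27/4)^n confine any such distribution to [-27/4, 27/4]
  (Markov's inequality). There polynomials are uniformly dense in the continuous functions, so
  two such distributions integrate the continuous approximations of indicators of half-lines
  equally, and hence have the same distribution function.
\<close>

section \<open>Compactly supported distributions are determined by their moments\<close>

lemma (in real_distribution) measure_abs_ge_le_even_moment:
  assumes "integrable M (\<lambda>x. x^(2 * k))" "0 < r"
  shows "measure M {x \<in> space M. r \<le> \<bar>x\<bar>} \<le> (\<integral>x. x^(2 * k) \<partial>M) / r^(2 * k)"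
proof -
  have "r^(2 * k) \<le> x^(2 * k)" if "r \<le> \<bar>x\<bar>" for x
  proof -
    have "r^(2 * k) \<le> \<bar>x\<bar>^(2 * k)" using that assms(2) by (intro power_mono) auto
    then show ?thesis by (simp add: power_even_abs)
  qed
  then have "{x \<in> space M. r \<le> \<bar>x\<bar>} \<subseteq> {x \<in> space M. r^(2 * k) \<le> x^(2 * k)}"
    by auto
  then have "measure M {x \<in> space M. r \<le> \<bar>x\<bar>} \<le> measure M {x \<in> space M. r^(2 * k) \<le> x^(2 * k)}"
    by (intro finite_measure_mono) auto
  also have "\<dots> \<le> (\<integral>x. x^(2 * k) \<partial>M) / r^(2 * k)"
    using assms by (intro integral_Markov_inequality_measure[where A = "space M"]) auto
  finally show ?thesis .
qed

lemma (in real_distribution) AE_abs_le_by_moment_bound: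
  assumes int: "\<And>n. integrable M (\<lambda>x. x^n)"
    and bound: "\<And>n. (\<integral>x. x^n \<partial>M) \<le> c^n" and "0 \<le> c"
  shows "AE x in M. \<bar>x\<bar> \<le> c"
proof (rule AE_upper_bound_inf)
  fix e :: real
  assume "0 < e"
  define r where "r = c + e"
  have r: "0 < r" "c < r" using \<open>0 \<le> c\<close> \<open>0 < e\<close> by (simp_all add: r_def)
  have "measure M {x \<in> space M. r \<le> \<bar>x\<bar>} \<le> ((c / r)^2)^k" for k
  proof -
    have "measure M {x \<in> space M. r \<le> \<bar>x\<bar>} \<le> (\<integral>x. x^(2 * k) \<partial>M) / r^(2 * k)"
      using measure_abs_ge_le_even_moment[OF int r(1)] .
    also have "\<dots> \<le> c^(2 * k) / r^(2 * k)" using bound r by (simp add: divide_right_mono)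
    finally show ?thesis by (simp add: power_divide power_mult)
  qed
  moreover have "(\<lambda>k. ((c / r)^2)^k) \<longlonglongrightarrow> 0"
    using r \<open>0 \<le> c\<close> by (intro LIMSEQ_power_zero) (simp add: power_less_one_iff abs_square_less_1)
  ultimately have "measure M {x \<in> space M. r \<le> \<bar>x\<bar>} \<le> 0"
    by (intro LIMSEQ_le_const[where X = "\<lambda>k. ((c / r)^2)^k"]) auto
  then have "emeasure M {x \<in> space M. r \<le> \<bar>x\<bar>} = 0"
    by (simp add: emeasure_eq_measure measure_le_0_iff)
  moreover have "{x \<in> space M. r \<le> \<bar>x\<bar>} \<in> events" by measurable
  ultimately show "AE x in M. \<bar>x\<bar> \<le> c + e"
    by (intro AE_I[where N = "{x \<in> space M. r \<le> \<bar>x\<bar>}"]) (auto simp: r_def)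
qed

lemma (in real_distribution) integral_approx_by_polynomial:
  fixes f :: "real \<Rightarrow> real"
  assumes int: "\<And>n. integrable M (\<lambda>x. x^n)" and supp: "AE x in M. \<bar>x\<bar> \<le> c"
    and f: "continuous_on UNIV f" "\<And>x. \<bar>f x\<bar> \<le> B"
    and approx: "\<And>x. x \<in> {-c..c} \<Longrightarrow> \<bar>f x - (\<Sum>i\<le>k. a i * x^i)\<bar> < e"
  shows "\<bar>(\<integral>x. f x \<partial>M) - (\<Sum>i\<le>k. a i * (\<integral>x. x^i \<partial>M))\<bar> \<le> e"
proof -
  have f_meas: "f \<in> borel_measurable M"
    using borel_measurable_continuous_onI[OF f(1)] measurable_cong_sets[OF events_eq_borel refl] by simp
  have f_int: "integrable M f" by (rule integrable_const_bound[where B = B]) (use f(2) f_meas in auto)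
  let ?h = "\<lambda>x. f x - (\<Sum>i\<le>k. a i * x^i)"
  have h_int: "integrable M ?h" using f_int int by auto
  have "(\<integral>x. ?h x \<partial>M) = (\<integral>x. f x \<partial>M) - (\<Sum>i\<le>k. a i * (\<integral>x. x^i \<partial>M))"
    using f_int int by (simp add: integral_sum)
  moreover have ae: "AE x in M. \<bar>?h x\<bar> \<le> e"
    using supp
  proof eventually_elim
    case (elim x)
    then have "x \<in> {-c..c}" by auto
    then show ?case using approx less_imp_le by blast
  qed
  have "(\<integral>x. ?h x \<partial>M) \<le> (\<integral>x. e \<partial>M)"
    by (rule integral_mono_AE[OF h_int]) (use ae in auto)
  moreover have "(\<integral>x. - e \<partial>M) \<le> (\<integral>x. ?h x \<partial>M)"
    by (rule integral_mono_AE[OF _ h_int]) (use ae in auto)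
  ultimately show ?thesis using prob_space by (simp add: abs_le_iff)
qed

lemma integral_eq_by_moments:
  fixes M N :: "real measure" and f :: "real \<Rightarrow> real"
  assumes M: "real_distribution M" and N: "real_distribution N"
    and int_M: "\<And>n. integrable M (\<lambda>x. x^n)" and int_N: "\<And>n. integrable N (\<lambda>x. x^n)"
    and moments: "\<And>n. (\<integral>x. x^n \<partial>M) = (\<integral>x. x^n \<partial>N)"
    and supp_M: "AE x in M. \<bar>x\<bar> \<le> c" and supp_N: "AE x in N. \<bar>x\<bar> \<le> c"
    and f: "continuous_on UNIV f" "\<And>x. \<bar>f x\<bar> \<le> B"
  shows "(\<integral>x. f x \<partial>M) = (\<integral>x. f x \<partial>N)"
proof (rule ccontr)
  define A B where "A = (\<integral>x. f x \<partial>M)" and "B = (\<integral>x. f x \<partial>N)"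
  define e where "e = \<bar>A - B\<bar> / 3"
  assume "(\<integral>x. f x \<partial>M) \<noteq> (\<integral>x. f x \<partial>N)"
  then have "0 < e" by (simp add: e_def A_def B_def)
  then obtain g where g: "real_polynomial_function g" "\<And>x. x \<in> {-c..c} \<Longrightarrow> \<bar>f x - g x\<bar> < e"
    using Stone_Weierstrass_real_polynomial_function[of "{-c..c}" f e] continuous_on_subset[OF f(1)]
    by auto
  then obtain a k where "g = (\<lambda>x. \<Sum>i\<le>k. a i * x^i)"
    using real_polynomial_function_iff_sum by metis
  with g(2) have approx: "\<And>x. x \<in> {-c..c} \<Longrightarrow> \<bar>f x - (\<Sum>i\<le>k. a i * x^i)\<bar> < e" by simp
  define S where "S = (\<Sum>i\<le>k. a i * (\<integral>x. x^i \<partial>M))"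
  have "\<bar>A - S\<bar> \<le> e" unfolding A_def S_def
    by (rule real_distribution.integral_approx_by_polynomial[OF M int_M supp_M f approx])
  moreover have "\<bar>B - S\<bar> \<le> e" unfolding B_def S_def moments
    by (rule real_distribution.integral_approx_by_polynomial[OF N int_N supp_N f approx])
  ultimately have "\<bar>A - B\<bar> \<le> 2 * e" by (simp add: abs_le_iff)
  then show False using \<open>0 < e\<close> by (simp add: e_def)
qed

lemma cdf_le_by_cts_step_integrals:
  fixes M N :: "real measure"
  assumes M: "real_distribution M" and N: "real_distribution N"
    and eq: "\<And>x y. x < y \<Longrightarrow> (\<integral>z. cts_step x y z \<partial>M) = (\<integral>z. cts_step x y z \<partial>N)"
  shows "cdf M x \<le> cdf N x"
proof -
  have "(cdf N \<longlongrightarrow> cdf N x) (at_right x)"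
    using finite_borel_measure.cdf_is_right_cont[OF real_distribution.finite_borel_measure_M[OF N]]
    unfolding continuous_within .
  moreover have "\<forall>\<^sub>F y in at_right x. cdf M x \<le> cdf N y"
    using eventually_at_right_less[of x]
  proof eventually_elim
    case (elim y)
    have "cdf M x \<le> (\<integral>z. cts_step x y z \<partial>M)" using real_distribution.cdf_cts_step(1)[OF M elim] .
    also have "\<dots> = (\<integral>z. cts_step x y z \<partial>N)" using eq[OF elim] .
    also have "\<dots> \<le> cdf N y" using real_distribution.cdf_cts_step(2)[OF N elim] .
    finally show ?case .
  qed
  ultimately show ?thesis by (rule tendsto_lowerbound) (simp add: trivial_limit_at_right_real)
qed

lemma real_distribution_eq_by_moments:
  fixes M N :: "real measure"
  assumes M: "real_distribution M" and N: "real_distribution N"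
    and int_M: "\<And>n. integrable M (\<lambda>x. x^n)" and int_N: "\<And>n. integrable N (\<lambda>x. x^n)"
    and moments: "\<And>n. (\<integral>x. x^n \<partial>M) = (\<integral>x. x^n \<partial>N)"
    and supp_M: "AE x in M. \<bar>x\<bar> \<le> c" and supp_N: "AE x in N. \<bar>x\<bar> \<le> c"
  shows "M = N"
proof -
  have step_eq: "(\<integral>z. cts_step x y z \<partial>M) = (\<integral>z. cts_step x y z \<partial>N)" if "x < y" for x y
  proof (rule integral_eq_by_moments[OF M N int_M int_N moments supp_M supp_N])
    show "continuous_on UNIV (cts_step x y)"
      by (rule uniformly_continuous_imp_continuous[OF cts_step_uniformly_continuous[OF that]])
    show "\<bar>cts_step x y z\<bar> \<le> 1" for z using that by (auto simp: cts_step_def field_simps)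
  qed
  have "cdf M = cdf N"
    using cdf_le_by_cts_step_integrals[OF M N step_eq] cdf_le_by_cts_step_integrals[OF N M step_eq[symmetric]]
    by (intro ext antisym)
  then show ?thesis using cdf_unique[OF M N] by blast
qed

section \<open>The substitution \<open>x = phi t\<close>\<close>

definition phi :: "real \<Rightarrow> real" where
  "phi t = 27 * t^3 / (1 + t^3)^2"

definition phi' :: "real \<Rightarrow> real" where
  "phi' t = 81 * t^2 * (1 - t^3) / (1 + t^3)^3"

definition phi_inv :: "real \<Rightarrow> real" where
  "phi_inv x = root 3 ((1 - sqrt (1 - 4 * x / 27)) / (1 + sqrt (1 - 4 * x / 27)))"

definition W :: "real \<Rightarrow> real" where
  "W t = (1 - t) * (1 + t)^3 / (12 * sqrt 3 * pi * t^2)"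

lemma one_plus_cube_pos: "0 \<le> t \<Longrightarrow> 0 < 1 + (t::real)^3"
  by (simp add: add_pos_nonneg)

lemma has_real_derivative_phi: "0 \<le> t \<Longrightarrow> (phi has_real_derivative phi' t) (at t)"
proof -
  assume "0 \<le> t"
  then have q: "0 < 1 + t^3" by (rule one_plus_cube_pos)
  have "(phi has_real_derivative
      (27 * (3 * t^2) * (1 + t^3)^2 - 27 * t^3 * (2 * (1 + t^3) * (3 * t^2))) / ((1 + t^3)^2)^2) (at t)"
    unfolding phi_def[abs_def] using q by (auto intro!: derivative_eq_intros simp: power2_eq_square)
  moreover have "(27 * (3 * t^2) * (1 + t^3)^2 - 27 * t^3 * (2 * (1 + t^3) * (3 * t^2))) / ((1 + t^3)^2)^2
      = phi' t"
    using q by (simp add: phi'_def field_simps) (simp add: algebra_simps eval_nat_numeral)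
  ultimately show ?thesis by simp
qed

lemma phi'_pos:
  assumes "0 < t" "t < 1"
  shows "0 < phi' t"
proof -
  have "t^3 < 1" using assms by (simp add: power_less_one_iff)
  then show ?thesis using assms one_plus_cube_pos[of t] by (simp add: phi'_def)
qed

lemma sqrt_one_minus_phi:
  assumes "0 \<le> t" "t \<le> 1"
  shows "sqrt (1 - 4 * phi t / 27) = (1 - t^3) / (1 + t^3)"
proof -
  have q: "0 < 1 + t^3" using assms(1) by (rule one_plus_cube_pos)
  have "1 - 4 * phi t / 27 = ((1 - t^3) / (1 + t^3))^2"
    using q by (simp add: phi_def field_simps) (simp add: algebra_simps power2_eq_square)
  moreover have "0 \<le> 1 - t^3" using assms by (simp add: power_le_one)
  ultimately show ?thesis using q by simp
qed

lemma
  assumes "0 \<le> x" "x \<le> 27/4"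
  shows phi_inv_bounds: "0 \<le> phi_inv x" "phi_inv x \<le> 1"
    and phi_phi_inv: "phi (phi_inv x) = x"
proof -
  define s where "s = sqrt (1 - 4 * x / 27)"
  have s: "0 \<le> s" "s \<le> 1" "s^2 = 1 - 4 * x / 27" using assms by (auto simp: s_def)
  define y where "y = (1 - s) / (1 + s)"
  have y: "0 \<le> y" "y \<le> 1" using s by (auto simp: y_def field_simps)
  have inv: "phi_inv x = root 3 y" by (simp add: phi_inv_def y_def s_def)
  show "0 \<le> phi_inv x" "phi_inv x \<le> 1" using y inv by auto
  have "phi (phi_inv x) = 27 * y / (1 + y)^2" using y by (simp add: phi_def inv)
  also have "\<dots> = 27 * (1 - s^2) / 4" using s by (simp add: y_def field_simps power2_eq_square)
  finally show "phi (phi_inv x) = x" using s by simp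
qed

lemma phi_inv_strict_bounds:
  assumes "0 < x" "x < 27/4"
  shows "0 < phi_inv x" "phi_inv x < 1"
proof -
  define s where "s = sqrt (1 - 4 * x / 27)"
  have s: "0 < s" "s < 1" using assms by (auto simp: s_def)
  have "0 < (1 - s) / (1 + s)" "(1 - s) / (1 + s) < 1" using s by (auto simp: field_simps)
  then show "0 < phi_inv x" "phi_inv x < 1" by (auto simp: phi_inv_def s_def[symmetric])
qed

lemma phi_inv_0: "phi_inv 0 = 0"
  and phi_inv_27_4: "phi_inv (27/4) = 1"
  by (simp_all add: phi_inv_def)

lemma continuous_on_phi_inv: "continuous_on {0..27/4} phi_inv"
proof -
  have "1 + sqrt (1 - 4 * x / 27) \<noteq> 0" if "x \<le> 27/4" for x :: real
  proof -
    have "0 \<le> sqrt (1 - 4 * x / 27)" using that by simp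
    then show ?thesis by linarith
  qed
  then show ?thesis unfolding phi_inv_def[abs_def] by (intro continuous_intros) auto
qed

lemma has_real_derivative_phi_inv:
  assumes "0 < x" "x < 27/4"
  shows "(phi_inv has_real_derivative inverse (phi' (phi_inv x))) (at x)"
proof (rule DERIV_inverse_function[where a = 0 and b = "27/4"])
  have t: "0 < phi_inv x" "phi_inv x < 1" using phi_inv_strict_bounds[OF assms] .
  show "(phi has_real_derivative phi' (phi_inv x)) (at (phi_inv x))"
    using t by (intro has_real_derivative_phi) simp
  show "phi' (phi_inv x) \<noteq> 0" using phi'_pos[OF t] by simp
  show "isCont phi_inv x"
    using continuous_on_interior[OF continuous_on_phi_inv] assms by simp
qed (use assms phi_phi_inv in auto)

lemma powr_cube: "0 < b \<Longrightarrow> ((b::real)^3) powr r = b powr (3 * r)"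
proof -
  assume b: "0 < b"
  have "b^3 = b powr 3" using powr_realpow[OF b, of 3] by simp
  then show ?thesis by (simp add: powr_powr)
qed

lemma powr_third_cube: "0 < x \<Longrightarrow> ((x::real) powr (1/3))^3 = x"
  using powr_cube[of "x powr (1/3)" 1] by (simp add: powr_powr)

lemma W_eq_cube_roots:
  fixes t u a :: real
  assumes t: "0 < t" and u: "0 < u" "u^3 = 1 + t^3" and a: "0 < a" "a^3 = 2"
  shows "sqrt 3 / (8 * a * pi * (3 * t / u^2)^2) * (3 * ((1 - t^3) / (1 + t^3)) - 1) * (a / u)
       + 1 / (4 * a^2 * pi * (3 * t / u^2) * sqrt 3) * (3 * ((1 - t^3) / (1 + t^3)) + 1) * (u / a)
       = W t"
proof -
  define q where "q = 1 + t^3"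
  have q: "0 < q" "u^3 = q" using t u by (simp_all add: q_def one_plus_cube_pos)
  have s3: "sqrt 3 * (sqrt 3 * x) = 3 * x" for x by (simp flip: mult.assoc)
  have "sqrt 3 / (8 * a * pi * (3 * t / u^2)^2) * (3 * ((1 - t^3) / q) - 1) * (a / u)
      = sqrt 3 * u^3 * (3 * ((1 - t^3) / q) - 1) / (72 * pi * t^2)"
    using t u(1) a(1) q(1) by (simp add: field_simps power2_eq_square power3_eq_cube)
  also have "\<dots> = sqrt 3 * (3 * (1 - t^3) - q) / (72 * pi * t^2)"
    using t q by (simp add: field_simps)
  also have "\<dots> = (1 - 2 * t^3) / (12 * pi * t^2 * sqrt 3)"
    using t by (simp add: q_def field_simps s3)
  finally have first: "sqrt 3 / (8 * a * pi * (3 * t / u^2)^2) * (3 * ((1 - t^3) / q) - 1) * (a / u)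
      = (1 - 2 * t^3) / (12 * pi * t^2 * sqrt 3)" .
  have "1 / (4 * a^2 * pi * (3 * t / u^2) * sqrt 3) * (3 * ((1 - t^3) / q) + 1) * (u / a)
      = u^3 * (3 * ((1 - t^3) / q) + 1) / (12 * a^3 * pi * t * sqrt 3)"
    using t u(1) a(1) q(1) by (simp add: field_simps power2_eq_square power3_eq_cube)
  also have "\<dots> = (3 * (1 - t^3) + q) / (24 * pi * t * sqrt 3)"
    using t q a(2) by (simp add: field_simps)
  also have "\<dots> = (2 - t^3) / (12 * pi * t * sqrt 3)"
    using t by (simp add: q_def field_simps)
  finally have second: "1 / (4 * a^2 * pi * (3 * t / u^2) * sqrt 3) * (3 * ((1 - t^3) / q) + 1) * (u / a)
      = (2 - t^3) / (12 * pi * t * sqrt 3)" .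
  have "(1 - 2 * t^3) / (12 * pi * t^2 * sqrt 3) + (2 - t^3) / (12 * pi * t * sqrt 3) = W t"
    using t unfolding W_def by (simp add: field_simps) (simp add: s3 algebra_simps eval_nat_numeral)
  then show ?thesis unfolding q_def[symmetric] first second .
qed

lemma V_phi:
  assumes t: "0 < t" "t < 1"
  shows "V (phi t) = W t"
proof -
  define q where "q = 1 + t^3"
  define u where "u = q powr (1/3)"
  define a where "a = (2::real) powr (1/3)"
  have q: "0 < q" using t by (simp add: q_def one_plus_cube_pos)
  have u: "0 < u" "u^3 = q" using q by (simp_all add: u_def powr_third_cube)
  have a: "0 < a" "a^3 = 2" by (simp_all add: a_def powr_third_cube)
  have "(3 * t / u^2)^3 = 27 * t^3 / (u^3)^2"
    by (simp add: power_divide power_mult_distrib flip: power_mult)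
  then have x: "phi t = (3 * t / u^2)^3" using u by (simp add: phi_def q_def)
  have x_pos: "0 < 3 * t / u^2" using t u by simp
  have y: "1 + (1 - t^3) / q = (a / u)^3"
    using a u q by (simp add: q_def field_simps power_divide)
  have y_pos: "0 < a / u" using a u by simp
  have x_roots: "phi t powr (1/3) = 3 * t / u^2" "phi t powr (2/3) = (3 * t / u^2)^2"
    using powr_cube[OF x_pos, of "1/3"] powr_cube[OF x_pos, of "2/3"] powr_realpow[OF x_pos, of 2] t
    unfolding x by simp_all
  have y_roots: "(1 + (1 - t^3) / q) powr (1/3) = a / u" "(1 + (1 - t^3) / q) powr (-1/3) = u / a"
    using powr_cube[OF y_pos, of "1/3"] powr_cube[OF y_pos, of "-1/3"] a(1) u(1)
    unfolding y by (simp_all add: powr_minus_divide)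
  have "(2::real) powr (10/3) = 2 powr (3 + 1/3)" by simp
  also have "\<dots> = 2 powr 3 * a" unfolding a_def by (rule powr_add)
  finally have two_10_3: "(2::real) powr (10/3) = 8 * a" by simp
  have "(2::real) powr (8/3) = 2 powr (2 + 2/3)" by simp
  also have "\<dots> = 2 powr 2 * 2 powr (2/3)" by (rule powr_add)
  also have "(2::real) powr (2/3) = a powr 2" by (simp add: a_def powr_powr)
  also have "a powr 2 = a^2" using powr_realpow[OF a(1), of 2] by simp
  finally have two_8_3: "(2::real) powr (8/3) = 4 * a^2" by simp
  show ?thesis
    unfolding V_def sqrt_one_minus_phi[OF less_imp_le less_imp_le, OF t] q_def[symmetric]
      x_roots y_roots two_10_3 two_8_3
    by (rule W_eq_cube_roots[OF t(1) u(1) _ a, unfolded q_def[symmetric]]) (simp add: u q_def)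
qed

lemma V_eq_W_phi_inv:
  assumes "0 < x" "x < 27/4"
  shows "V x = W (phi_inv x)"
proof -
  have "V (phi (phi_inv x)) = W (phi_inv x)" using V_phi[OF phi_inv_strict_bounds[OF assms]] .
  then show ?thesis using phi_phi_inv[of x] assms by simp
qed

lemma V_nonneg:
  assumes "0 < x" "x < 27/4"
  shows "0 \<le> V x"
proof -
  have "0 < phi_inv x" "phi_inv x < 1" using phi_inv_strict_bounds[OF assms] .
  then show ?thesis using V_eq_W_phi_inv[OF assms] by (simp add: W_def)
qed

lemma has_integral_phi_subst:
  fixes K g f :: "real \<Rightarrow> real"
  assumes K_cont: "continuous_on {0..1} K"
    and K_deriv: "\<And>t. 0 < t \<Longrightarrow> t < 1 \<Longrightarrow> (K has_real_derivative g t * phi' t) (at t)"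
    and f_eq: "\<And>x. 0 < x \<Longrightarrow> x < 27/4 \<Longrightarrow> f x = g (phi_inv x)"
  shows "(f has_integral K 1 - K 0) {0..27/4}"
proof -
  have "(f has_integral K (phi_inv (27/4)) - K (phi_inv 0)) {0..27/4}"
  proof (rule fundamental_theorem_of_calculus_interior)
    show "continuous_on {0..27/4} (\<lambda>x. K (phi_inv x))"
      by (rule continuous_on_compose2[OF K_cont continuous_on_phi_inv]) (auto simp: phi_inv_bounds)
  next
    fix x :: real
    assume "x \<in> {0<..<27/4}"
    then have x: "0 < x" "x < 27/4" by auto
    have t: "0 < phi_inv x" "phi_inv x < 1" using phi_inv_strict_bounds[OF x] .
    have "((\<lambda>x. K (phi_inv x)) has_real_derivative
        g (phi_inv x) * phi' (phi_inv x) * inverse (phi' (phi_inv x))) (at x)"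
      using DERIV_chain2[OF K_deriv[OF t] has_real_derivative_phi_inv[OF x]] .
    then have "((\<lambda>x. K (phi_inv x)) has_real_derivative f x) (at x)"
      using phi'_pos[OF t] f_eq[OF x] by (simp add: mult.assoc)
    then show "((\<lambda>x. K (phi_inv x)) has_vector_derivative f x) (at x)"
      by (simp add: has_real_derivative_iff_has_vector_derivative)
  qed simp
  then show ?thesis by (simp add: phi_inv_0 phi_inv_27_4)
qed

section \<open>The moments of V\<close>

definition mass_antideriv :: "real \<Rightarrow> real" where
  "mass_antideriv t =
     (9/4 * (t - t^3) / (t^2 - t + 1)^2 + 3 * sqrt 3 * arctan ((2 * t - 1) / sqrt 3)) / (sqrt 3 * pi)"

lemma quadratic_pos: "0 < t^2 - t + (1::real)"
proof -
  have "t^2 - t + 1 = (t - 1/2)^2 + 3/4" by (simp add: power2_eq_square algebra_simps)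
  moreover have "0 \<le> (t - 1/2)^2" by simp
  ultimately show ?thesis by linarith
qed

lemma has_real_derivative_arctan_term:
  "((\<lambda>t. arctan ((2 * t - 1) / sqrt 3)) has_real_derivative (sqrt 3 / 2) / (t^2 - t + 1)) (at t)"
proof -
  have "((\<lambda>t. (2 * t - 1) / sqrt 3) has_real_derivative 2 / sqrt 3) (at t)"
    by (auto intro!: derivative_eq_intros simp: field_simps)
  from DERIV_chain2[OF DERIV_arctan this]
  have deriv: "((\<lambda>t. arctan ((2 * t - 1) / sqrt 3)) has_real_derivative
      inverse (1 + ((2 * t - 1) / sqrt 3)^2) * (2 / sqrt 3)) (at t)" .
  have denom: "1 + ((2 * t - 1) / sqrt 3)^2 = 4 * (t^2 - t + 1) / 3"
    by (simp add: power_divide field_simps power2_eq_square)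
  have "inverse (4 * r / 3) * (2 / sqrt 3) = (sqrt 3 / 2) / r" if "0 < r" for r :: real
    using that by (simp add: field_simps)
  from this[OF quadratic_pos] deriv show ?thesis unfolding denom by (simp only:)
qed

lemma has_real_derivative_mass_antideriv:
  assumes "0 < t"
  shows "(mass_antideriv has_real_derivative W t * phi' t) (at t)"
proof -
  have r: "0 < t^2 - t + 1" by (rule quadratic_pos)
  have q: "0 < 1 + t^3" using assms by (simp add: one_plus_cube_pos)
  let ?R = "(9/4 * (1 - 3 * t^2) * (t^2 - t + 1)^2 - 9/4 * (t - t^3) * (2 * (t^2 - t + 1) * (2 * t - 1)))
      / ((t^2 - t + 1)^2)^2"
  have "((\<lambda>t. 9/4 * (t - t^3) / (t^2 - t + 1)^2) has_real_derivative ?R) (at t)"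
    using r by (auto intro!: derivative_eq_intros simp: power2_eq_square) (simp add: field_simps)
  then have deriv: "(mass_antideriv has_real_derivative
      (?R + 3 * sqrt 3 * ((sqrt 3 / 2) / (t^2 - t + 1))) / (sqrt 3 * pi)) (at t)"
    unfolding mass_antideriv_def[abs_def]
    by (intro DERIV_cdivide DERIV_add DERIV_cmult has_real_derivative_arctan_term)
  have arctan_part: "3 * sqrt 3 * ((sqrt 3 / 2) / (t^2 - t + 1)) = 9 / (2 * (t^2 - t + 1))"
    by (simp add: field_simps)
  have rational_part: "?R + 9 / (2 * (t^2 - t + 1)) = 81 * (1 - t) * (1 + t)^3 * (1 - t^3) / (12 * (1 + t^3)^3)"
  proof -
    have "(9/4 * (1 - 3 * t^2) * r^2 - 9/4 * (t - t^3) * (2 * r * (2 * t - 1))) / (r^2)^2 + 9 / (2 * r)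
        = 81 * (1 - t) * (1 + t)^3 * (1 - t^3) / (12 * q^3)"
      if "r \<noteq> 0" "q \<noteq> 0" "r = t^2 - t + 1" "q = 1 + t^3" for r q :: real
      using that(1,2) by (simp add: field_simps) (use that(3,4) in algebra)
    then show ?thesis using r q by simp
  qed
  have "W t * phi' t = 81 * (1 - t) * (1 + t)^3 * (1 - t^3) / (12 * (1 + t^3)^3) / (sqrt 3 * pi)"
    using assms q unfolding W_def phi'_def by (simp add: field_simps)
  then show ?thesis using deriv unfolding arctan_part rational_part by simp
qed

lemma mass_antideriv_endpoints: "mass_antideriv 1 - mass_antideriv 0 = 1"
proof -
  have "arctan (1 / sqrt 3) = pi / 6" using arctan_tan[of "pi/6"] tan_30 by simp
  then show ?thesis by (simp add: mass_antideriv_def arctan_minus)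
qed

lemma has_integral_V: "(V has_integral 1) {0..27/4}"
proof -
  have "continuous_on {0..1} mass_antideriv"
    unfolding mass_antideriv_def[abs_def] using quadratic_pos
    by (intro continuous_intros) (auto simp: less_le)
  then have "(V has_integral mass_antideriv 1 - mass_antideriv 0) {0..27/4}"
    by (rule has_integral_phi_subst) (use has_real_derivative_mass_antideriv V_eq_W_phi_inv in auto)
  then show ?thesis by (simp add: mass_antideriv_endpoints)
qed

text \<open>Found by undetermined coefficients from \<open>moment_poly_ode\<close> below.\<close>

definition moment_poly :: "real \<Rightarrow> real \<Rightarrow> real" where
  "moment_poly r t = 3/4 * (- (3 * r + 2) * (1 - t^10) - 2 * (3 * r + 1) * (t - t^9)
     + 4 * (3 * r + 1) * (t^3 - t^7) + 5 * (3 * r + 2) * (t^4 - t^6))"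

definition moment_poly' :: "real \<Rightarrow> real \<Rightarrow> real" where
  "moment_poly' r t = 3/4 * ((3 * r + 2) * (10 * t^9) - 2 * (3 * r + 1) * (1 - 9 * t^8)
     + 4 * (3 * r + 1) * (3 * t^2 - 7 * t^6) + 5 * (3 * r + 2) * (4 * t^3 - 6 * t^5))"

lemma has_real_derivative_moment_poly: "(moment_poly r has_real_derivative moment_poly' r t) (at t)"
  unfolding moment_poly_def[abs_def] moment_poly'_def
  by (auto intro!: derivative_eq_intros simp: algebra_simps)

lemma moment_poly_ode:
  "4 * ((3 * r + 1) * moment_poly r t * (1 + t^3) + t * moment_poly' r t * (1 + t^3)
        - 6 * (r + 2) * t^3 * moment_poly r t)
   = (54 * (r + 2) * (2 * r + 1) * t^3 - 3 * (3 * r + 1) * (3 * r + 2) * (1 + t^3)^2)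
       * (1 - t) * (1 + t)^3 * (1 - t^3)"
  unfolding moment_poly_def moment_poly'_def by algebra

definition moment_frac :: "real \<Rightarrow> real \<Rightarrow> real" where
  "moment_frac r t = t * moment_poly r t / (1 + t^3)^4"

definition moment_frac' :: "real \<Rightarrow> real \<Rightarrow> real" where
  "moment_frac' r t = ((moment_poly r t + t * moment_poly' r t) * (1 + t^3) - 12 * t^3 * moment_poly r t)
     / (1 + t^3)^5"

lemma has_real_derivative_moment_frac:
  assumes "0 \<le> t"
  shows "(moment_frac r has_real_derivative moment_frac' r t) (at t)"
proof -
  have q: "0 < 1 + t^3" using assms by (rule one_plus_cube_pos)
  have "(moment_frac r has_real_derivative
      ((moment_poly r t + t * moment_poly' r t) * (1 + t^3)^4
        - t * moment_poly r t * (4 * (1 + t^3)^3 * (3 * t^2))) / ((1 + t^3)^4)^2) (at t)"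
    unfolding moment_frac_def[abs_def] using q
    by (auto intro!: derivative_eq_intros has_real_derivative_moment_poly simp: algebra_simps)
  moreover have "((moment_poly r t + t * moment_poly' r t) * (1 + t^3)^4
        - t * moment_poly r t * (4 * (1 + t^3)^3 * (3 * t^2))) / ((1 + t^3)^4)^2 = moment_frac' r t"
    using q unfolding moment_frac'_def by (simp add: field_simps) algebra
  ultimately show ?thesis by simp
qed

lemma moment_frac_ode:
  assumes "0 < t"
  shows "r * phi' t * moment_frac r t + phi t * moment_frac' r t
    = phi t * (2 * (r + 2) * (2 * r + 1) * phi t - 3 * (3 * r + 1) * (3 * r + 2))
        * ((1 - t) * (1 + t)^3 / (12 * t^2)) * phi' t / 27"
proof -
  have q: "0 < 1 + t^3" using assms by (simp add: one_plus_cube_pos)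
  show ?thesis
    using q assms unfolding phi'_def moment_frac_def moment_frac'_def phi_def
    by (simp add: field_simps) (use moment_poly_ode[of r t] in algebra)
qed

definition moment_antideriv :: "nat \<Rightarrow> real \<Rightarrow> real" where
  "moment_antideriv n t = 27 / (sqrt 3 * pi) * (phi t ^ n * moment_frac (real n) t)"

lemma has_real_derivative_moment_antideriv:
  assumes "0 < t" "t < 1"
  shows "(moment_antideriv n has_real_derivative
     (2 * (real n + 2) * (2 * real n + 1) * phi t - 3 * (3 * real n + 1) * (3 * real n + 2))
       * phi t ^ n * W t * phi' t) (at t)"
proof -
  let ?r = "real n"
  have x: "0 < phi t" using assms one_plus_cube_pos[of t] by (simp add: phi_def)
  have deriv: "(moment_antideriv n has_real_derivative 27 / (sqrt 3 * pi)
      * (?r * phi t ^ (n - 1) * phi' t * moment_frac ?r t + phi t ^ n * moment_frac' ?r t)) (at t)"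
    unfolding moment_antideriv_def[abs_def] using assms
    by (auto intro!: derivative_eq_intros has_real_derivative_phi has_real_derivative_moment_frac)
  have pow: "?r * phi t ^ (n - 1) = ?r * phi t ^ n / phi t" using x by (cases n) auto
  have "27 / (sqrt 3 * pi) * (?r * phi t ^ (n - 1) * phi' t * moment_frac ?r t + phi t ^ n * moment_frac' ?r t)
      = 27 / (sqrt 3 * pi) * (phi t ^ n / phi t) * (?r * phi' t * moment_frac ?r t + phi t * moment_frac' ?r t)"
    using x unfolding pow by (simp add: field_simps)
  also have "\<dots> = (2 * (?r + 2) * (2 * ?r + 1) * phi t - 3 * (3 * ?r + 1) * (3 * ?r + 2))
      * phi t ^ n * W t * phi' t"
    unfolding moment_frac_ode[OF assms(1)] using x assms unfolding W_def by (simp add: field_simps)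
  finally show ?thesis using deriv by simp
qed

lemma has_integral_moment_recurrence:
  "((\<lambda>x. (2 * (real n + 2) * (2 * real n + 1) * x - 3 * (3 * real n + 1) * (3 * real n + 2))
      * x^n * V x) has_integral 0) {0..27/4}"
proof -
  have "continuous_on {0..1} (moment_antideriv n)"
    unfolding moment_antideriv_def[abs_def] phi_def moment_frac_def moment_poly_def
    by (intro continuous_intros) (auto simp: add_nonneg_eq_0_iff)
  then have "((\<lambda>x. (2 * (real n + 2) * (2 * real n + 1) * x - 3 * (3 * real n + 1) * (3 * real n + 2))
      * x^n * V x) has_integral moment_antideriv n 1 - moment_antideriv n 0) {0..27/4}"
    by (rule has_integral_phi_subst)
      (use has_real_derivative_moment_antideriv V_eq_W_phi_inv phi_phi_inv in auto)
  then show ?thesis by (simp add: moment_antideriv_def moment_frac_def moment_poly_def)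
qed

definition mu0_moment :: "nat \<Rightarrow> real" where
  "mu0_moment n = real ((3 * n) choose n) / real (n + 1)"

lemma mu0_moment_0: "mu0_moment 0 = 1"
  by (simp add: mu0_moment_def)

lemma mu0_moment_Suc:
  "2 * (real n + 2) * (2 * real n + 1) * mu0_moment (Suc n)
   = 3 * (3 * real n + 1) * (3 * real n + 2) * mu0_moment n"
proof -
  have "mu0_moment (Suc n) = fact (3 * n + 3) / (fact (n + 1) * fact (2 * n + 2) * (real n + 2))"
    using binomial_fact[of "n + 1" "3 * n + 3", where 'a = real]
    by (simp add: mu0_moment_def numeral_eq_Suc)
  also have "\<dots> = (3 * real n + 3) * (3 * real n + 2) * (3 * real n + 1) * fact (3 * n)
      / ((real n + 1) * fact n * ((2 * real n + 2) * (2 * real n + 1) * fact (2 * n)) * (real n + 2))"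
    by (simp add: numeral_eq_Suc algebra_simps)
  finally have "mu0_moment (Suc n) = \<dots>" .
  moreover have "mu0_moment n = fact (3 * n) / (fact n * fact (2 * n) * (real n + 1))"
    using binomial_fact[of n "3 * n", where 'a = real] by (simp add: mu0_moment_def)
  moreover have "2 * (N + 2) * (2 * N + 1) * ((3 * N + 3) * (3 * N + 2) * (3 * N + 1) * F
      / ((N + 1) * f * ((2 * N + 2) * (2 * N + 1) * g) * (N + 2)))
    = 3 * (3 * N + 1) * (3 * N + 2) * (F / (f * g * (N + 1)))"
    if "0 < f" "0 < g" "0 \<le> N" for f g F N :: real
    using that by (simp add: divide_simps) (simp add: algebra_simps)
  ultimately show ?thesis by simp
qed

lemma mu0_moment_le: "mu0_moment n \<le> (27/4)^n"
proof (induction n)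
  case 0
  then show ?case by (simp add: mu0_moment_0)
next
  case (Suc n)
  define a b where "a = 2 * (real n + 2) * (2 * real n + 1)" and "b = 3 * (3 * real n + 1) * (3 * real n + 2)"
  have "b * mu0_moment n \<le> (27/4 * a) * mu0_moment n"
    by (rule mult_right_mono) (simp_all add: a_def b_def algebra_simps mu0_moment_def)
  then have "a * mu0_moment (Suc n) \<le> a * (27/4 * mu0_moment n)"
    using mu0_moment_Suc[of n] by (simp add: a_def b_def mult_ac)
  moreover have "0 < a" by (simp add: a_def)
  ultimately have "mu0_moment (Suc n) \<le> 27/4 * mu0_moment n" by simp
  with Suc.IH show ?case by simp
qed

lemma has_integral_moments: "((\<lambda>x. x^n * V x) has_integral mu0_moment n) {0..27/4}"
proof (induction n)
  case 0
  then show ?case using has_integral_V by (simp add: mu0_moment_0)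
next
  case (Suc n)
  define a b where "a = 2 * (real n + 2) * (2 * real n + 1)" and "b = 3 * (3 * real n + 1) * (3 * real n + 2)"
  have "((\<lambda>x. (a * x - b) * x^n * V x + b * (x^n * V x)) has_integral 0 + b * mu0_moment n) {0..27/4}"
    unfolding a_def b_def by (intro has_integral_add has_integral_moment_recurrence has_integral_mult_right Suc.IH)
  moreover have "(\<lambda>x. (a * x - b) * x^n * V x + b * (x^n * V x)) = (\<lambda>x. a * (x^Suc n * V x))"
    by (simp add: fun_eq_iff algebra_simps)
  moreover have "0 + b * mu0_moment n = a * mu0_moment (Suc n)"
    using mu0_moment_Suc[of n] by (simp add: a_def b_def)
  ultimately have "((\<lambda>x. a * (x^Suc n * V x)) has_integral a * mu0_moment (Suc n)) {0..27/4}"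
    by simp
  moreover have "a \<noteq> 0" by (simp add: a_def)
  ultimately show ?case by (simp add: has_integral_mult_right_iff)
qed

lemma V_measurable [measurable]: "V \<in> borel_measurable borel"
  unfolding V_def[abs_def] by measurable

lemma nn_integral_mu0_density_power:
  "(\<integral>\<^sup>+x. ennreal (indicator {0<..<27/4} x * V x * x^n) \<partial>lborel) = ennreal (mu0_moment n)"
proof -
  have "((\<lambda>x. x^n * V x) has_integral mu0_moment n) (box 0 (27/4))
      = ((\<lambda>x. x^n * V x) has_integral mu0_moment n) (cbox 0 (27/4))"
    by (rule has_integral_open_interval)
  then have open_int: "((\<lambda>x. x^n * V x) has_integral mu0_moment n) {0<..<27/4}"
    using has_integral_moments unfolding box_real cbox_interval by simp
  have "(\<integral>\<^sup>+x. ennreal (x^n * V x) * indicator {0<..<27/4} x \<partial>lborel) = ennreal (mu0_moment n)"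
    by (rule nn_integral_has_integral_lebesgue'[OF _ open_int]) (auto intro!: mult_nonneg_nonneg V_nonneg)
  moreover have "(\<integral>\<^sup>+x. ennreal (indicator {0<..<27/4} x * V x * x^n) \<partial>lborel)
      = (\<integral>\<^sup>+x. ennreal (x^n * V x) * indicator {0<..<27/4} x \<partial>lborel)"
    by (intro nn_integral_cong) (auto simp: indicator_def mult.commute)
  ultimately show ?thesis by simp
qed

lemma integrable_mu0_power: "integrable mu0 (\<lambda>x. x^n)"
  and integral_mu0_power: "(\<integral>x. x^n \<partial>mu0) = mu0_moment n"
proof -
  let ?g = "\<lambda>x. indicator {0<..<27/4} x * V x :: real"
  have g_nonneg: "0 \<le> ?g x" for x by (auto simp: indicator_def intro: V_nonneg)
  have "0 \<le> ?g x * x^n" for x by (auto simp: indicator_def intro!: mult_nonneg_nonneg V_nonneg)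
  have "integrable lborel (\<lambda>x. ?g x * x^n)"
    using nn_integral_mu0_density_power[of n]
    by (intro integrableI_nonneg) (auto simp: \<open>\<And>x. 0 \<le> ?g x * x^n\<close>)
  then show "integrable mu0 (\<lambda>x. x^n)"
    unfolding mu0_def using g_nonneg by (simp add: integrable_density)
  have "(\<integral>x. x^n \<partial>mu0) = (\<integral>x. ?g x * x^n \<partial>lborel)"
    unfolding mu0_def using g_nonneg by (simp add: integral_density)
  also have "\<dots> = enn2real (\<integral>\<^sup>+x. ennreal (?g x * x^n) \<partial>lborel)"
    by (rule integral_eq_nn_integral) (auto simp: \<open>\<And>x. 0 \<le> ?g x * x^n\<close>)
  finally show "(\<integral>x. x^n \<partial>mu0) = mu0_moment n"
    by (simp add: nn_integral_mu0_density_power mu0_moment_def)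
qed

lemma real_distribution_mu0: "real_distribution mu0"
proof -
  have "emeasure mu0 (space mu0) = (\<integral>\<^sup>+x. ennreal (indicator {0<..<27/4} x * V x) \<partial>lborel)"
    unfolding mu0_def by (simp add: emeasure_density)
  also have "\<dots> = 1" using nn_integral_mu0_density_power[of 0] by (simp add: mu0_moment_0)
  finally have "prob_space mu0" by (rule prob_spaceI)
  then show ?thesis by (simp add: real_distribution_def real_distribution_axioms_def mu0_def)
qed

lemma real_distribution_eq_mu0:
  assumes M: "real_distribution M"
    and moments: "\<And>n. integrable M (\<lambda>x. x^n)" "\<And>n. (\<integral>x. x^n \<partial>M) = mu0_moment n"
  shows "M = mu0"
proof -
  have supp_M: "AE x in M. \<bar>x\<bar> \<le> 27/4"
    by (rule real_distribution.AE_abs_le_by_moment_bound[OF M]) (simp_all add: moments mu0_moment_le)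
  have supp_mu0: "AE x in mu0. \<bar>x\<bar> \<le> 27/4"
    by (rule real_distribution.AE_abs_le_by_moment_bound[OF real_distribution_mu0])
      (simp_all add: integrable_mu0_power integral_mu0_power mu0_moment_le)
  show ?thesis
    by (rule real_distribution_eq_by_moments[OF M real_distribution_mu0 moments(1)
          integrable_mu0_power _ supp_M supp_mu0]) (simp add: moments integral_mu0_power)
qed

theorem mainTheorem4:
  shows "(\<forall>n::nat. ((\<lambda>x. x ^ n * V x) has_integral
              (real ((3 * n) choose n) / real (n + 1))) {0..27/4})
     \<and> (\<forall>x\<in>{0<..<27/4}. 0 \<le> V x)
     \<and> prob_space mu0
     \<and> (\<forall>n::nat. integrable mu0 (\<lambda>x. x ^ n)
              \<and> (\<integral>x. x ^ n \<partial>mu0) = real ((3 * n) choose n) / real (n + 1))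
     \<and> (\<forall>M :: real measure. prob_space M \<and> sets M = sets borel
          \<and> (\<forall>n::nat. integrable M (\<lambda>x. x ^ n)
               \<and> (\<integral>x. x ^ n \<partial>M) = real ((3 * n) choose n) / real (n + 1))
          \<longrightarrow> M = mu0)"
  unfolding mu0_moment_def[symmetric]
  using has_integral_moments V_nonneg real_distribution_mu0 integrable_mu0_power integral_mu0_power
    real_distribution_eq_mu0
  by (auto simp: real_distribution_def real_distribution_axioms_def)

end
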